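(* Let $k\in\frac12\mathbb{Z}_{>0}$. The set of monomials \[ \prod_{a=1}^n\phi_a^{p_a}(\phi_a^* )^{d_a}\omega_a^{v_a}\qquad(\text{factors in the order } a=1,\dots,n), \] with $p_a,d_a\in\{0,1\}$ and $v_a\in\{0,1,\dots,2k-1\}$, is a $\mathbb{k}$-basis of $\mathrm{Cl}_q(n,k)$.
   Context: Let $\mathbb{k}$ be a field of characteristic different from $2$, $q\in\mathbb{k}^\times$, $n$ a positive integer and $k\in\frac12\mathbb{Z}_{>0}$ (so $2k$ is a positive integer). Here $\mathrm{Cl}_q(n,k)$ is the unital associative $\mathbb{k}$-algebra generated by $\omega_a,\phi_a,\phi_a^*$ ($a=1,\dots,n$) subject to, for all $a,b$: $\omega_a\omega_b=\omega_b\omega_a$; $\omega_a^{4k}=(1+q^{-2k})\omega_a^{2k}-q^{-2k}$; $\omega_a\phi_b=q^{\delta_{ab}}\phi_b\omega_a$; $\omega_a\phi_b^*=q^{-\delta_{ab}}\phi_b^*\omega_a$; $\phi_a\phi_b+\phi_b\phi_a=0$; $\phi_a^*\phi_b^*+\phi_b^*\phi_a^*=0$; $\phi_a\phi_a^*+\phi_a^*\phi_a=1$; $\phi_a\phi_a^*+q^{-2k}\phi_a^*\phi_a=\omega_a^{2k}$; $\phi_a\phi_b^*+\phi_b^*\phi_a=0$ if $a\neq b$. (For integer $k$ this is a presentation of the algebra with generators $\psi_a,\psi_a^*,\omega_a^{\pm1}$ and relations $\omega_a\psi_b=q^{\delta_{ab}}\psi_b\omega_a$, $\omega_a\psi_b^*=q^{-\delta_{ab}}\psi_b^*\omega_a$,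 $\psi$'s and $\psi^*$'s pairwise anticommuting except $\psi_a\psi_a^*+q^{\pm k}\psi_a^*\psi_a=\omega_a^{\mp k}$, via $\phi_a=\psi_a$, $\phi_a^*=\psi_a^*\omega_a^k$.) *)

theory Defs
  imports Main
begin

text \<open>Generators of the free algebra: Om a = omega_a, Ph a = phi_a, Ps a = phi_a^*.\<close>
datatype gen = Om nat | Ph nat | Ps nat

text \<open>Elements of the free associative algebra over 'k on the generators:
  functions from words to coefficients (we only use finitely supported ones).\<close>
type_synonym 'k fa = "gen list \<Rightarrow> 'k"

definition fin_supp :: "'k::zero fa \<Rightarrow> bool" where
  "fin_supp f \<longleftrightarrow> finite {w. f w \<noteq> 0}"

definition supp :: "'k::zero fa \<Rightarrow> gen list set" where
  "supp f = {w. f w \<noteq> 0}"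

definition fmon :: "gen list \<Rightarrow> 'k::{zero,one} fa" where
  "fmon w = (\<lambda>u. if u = w then 1 else 0)"

definition fadd :: "'k::plus fa \<Rightarrow> 'k fa \<Rightarrow> 'k fa" where
  "fadd f g = (\<lambda>u. f u + g u)"

definition fsub :: "'k::minus fa \<Rightarrow> 'k fa \<Rightarrow> 'k fa" where
  "fsub f g = (\<lambda>u. f u - g u)"

definition fsmult :: "'k::times \<Rightarrow> 'k fa \<Rightarrow> 'k fa" where
  "fsmult c f = (\<lambda>u. c * f u)"

definition fmul :: "'k::comm_semiring_1 fa \<Rightarrow> 'k fa \<Rightarrow> 'k fa" where
  "fmul f g = (\<lambda>w. \<Sum>i\<le>length w. f (take i w) * g (drop i w))"

definition gen_idx :: "gen \<Rightarrow> nat" where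
  "gen_idx g = (case g of Om a \<Rightarrow> a | Ph a \<Rightarrow> a | Ps a \<Rightarrow> a)"

definition valid_word :: "nat \<Rightarrow> gen list \<Rightarrow> bool" where
  "valid_word n w \<longleftrightarrow> (\<forall>g\<in>set w. gen_idx g \<in> {1..n})"

text \<open>Defining relators of Cl_q(n,k), with m = 2k (a positive integer).
  Each relation  L = R  is encoded as the element  L - R.\<close>
definition cl_rels :: "'k::field \<Rightarrow> nat \<Rightarrow> nat \<Rightarrow> 'k fa set" where
  "cl_rels q m n =
    (\<Union>a\<in>{1..n}. \<Union>b\<in>{1..n}.
      { fsub (fmon [Om a, Om b]) (fmon [Om b, Om a]),
        fadd (fsub (fmon (replicate (2*m) (Om a)))
                   (fsmult (1 + (inverse q)^m) (fmon (replicate m (Om a)))))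
             (fsmult ((inverse q)^m) (fmon [])),
        fsub (fmon [Om a, Ph b]) (fsmult (if a = b then q else 1) (fmon [Ph b, Om a])),
        fsub (fmon [Om a, Ps b]) (fsmult (if a = b then inverse q else 1) (fmon [Ps b, Om a])),
        fadd (fmon [Ph a, Ph b]) (fmon [Ph b, Ph a]),
        fadd (fmon [Ps a, Ps b]) (fmon [Ps b, Ps a]),
        fsub (fadd (fmon [Ph a, Ps a]) (fmon [Ps a, Ph a])) (fmon []),
        fsub (fadd (fmon [Ph a, Ps a]) (fsmult ((inverse q)^m) (fmon [Ps a, Ph a])))
             (fmon (replicate m (Om a))) }
      \<union> (if a \<noteq> b then {fadd (fmon [Ph a, Ps b]) (fmon [Ps b, Ph a])} else {}))"

inductive_set cl_ideal :: "'k::field \<Rightarrow> nat \<Rightarrow> nat \<Rightarrow> 'k fa set"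
  for q :: "'k::field" and m n :: nat where
  rel: "r \<in> cl_rels q m n \<Longrightarrow> r \<in> cl_ideal q m n"
| zero: "(\<lambda>_. 0) \<in> cl_ideal q m n"
| add: "x \<in> cl_ideal q m n \<Longrightarrow> y \<in> cl_ideal q m n \<Longrightarrow> fadd x y \<in> cl_ideal q m n"
| smult: "x \<in> cl_ideal q m n \<Longrightarrow> fsmult c x \<in> cl_ideal q m n"
| lmul: "x \<in> cl_ideal q m n \<Longrightarrow> valid_word n u \<Longrightarrow> fmul (fmon u) x \<in> cl_ideal q m n"
| rmul: "x \<in> cl_ideal q m n \<Longrightarrow> valid_word n u \<Longrightarrow> fmul x (fmon u) \<in> cl_ideal q m n"

definition ord_word :: "nat \<Rightarrow> (nat \<Rightarrow> nat) \<Rightarrow> (nat \<Rightarrow> nat) \<Rightarrow> (nat \<Rightarrow> nat) \<Rightarrow> gen list" where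
  "ord_word n p d v =
     concat (map (\<lambda>a. replicate (p a) (Ph a) @ replicate (d a) (Ps a) @ replicate (v a) (Om a))
                 [1..<n+1])"

definition cl_basis_words :: "nat \<Rightarrow> nat \<Rightarrow> gen list set" where
  "cl_basis_words m n =
     {ord_word n p d v | p d v. \<forall>a\<in>{1..n}. p a \<le> 1 \<and> d a \<le> 1 \<and> v a < m}"

end

theory Submission
  imports Defs "HOL-Library.Function_Algebras"
begin

text \<open>
  Spanning: the relations rewrite any word, one generator at a time from the left, into a
  combination of ordered monomials. A generator moves past the factors of the other sites at the
  cost of a scalar; at its own site \<phi>_a^2 = (\<phi>_a^*)^2 = 0 (this needs char \<noteq> 2),
  \<phi>_a^* \<phi>_a = 1 - \<phi>_a \<phi>_a^* and \<omega>_a^{2k} = \<phi>_a \<phi>_a^* + q^{-2k} \<phi>_a^* \<phi>_a bring the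
  exponents back to p, d \<le> 1 and v < 2k.

  Independence: the free algebra acts on functions of states t : a \<mapsto> (i_a, j_a, l_a).
  \<phi>_a and \<phi>_a^* change the occupation bit i_a, with the Jordan-Wigner sign of the sites b < a
  measured relative to fixed reference bits j_b; \<omega>_a multiplies by q^{-i_a} and rotates the
  phase l_a in Z/2k. The relators act as zero, hence so does the ideal. On the vector that is 1
  exactly where all i_a = j_a and l_a = 0, the monomials are triangular: at the state probing a
  monomial, the only other monomials that do not vanish arise from it by emptying some of the
  sites carrying \<phi>_a \<phi>_a^*. In a nontrivial relation, the monomial with fewest such sites
  therefore survives.
\<close>

section \<open>Words and the free algebra\<close>

lemma fadd_eq_plus [simp]: "fadd f g = f + g"
  by (simp add: fadd_def fun_eq_iff)

lemma fsub_eq_minus [simp]: "fsub f g = f - g"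
  by (simp add: fsub_def fun_eq_iff)

lemma fsmult_one [simp]: "fsmult 1 x = (x :: 'k::comm_ring_1 fa)"
  by (simp add: fsmult_def)

lemma fsmult_fsmult [simp]: "fsmult c (fsmult d x) = fsmult (c * d) (x :: 'k::comm_ring_1 fa)"
  by (simp add: fsmult_def fun_eq_iff)

lemma fsmult_diff: "fsmult c (x - y) = fsmult c x - fsmult c (y :: 'k::comm_ring_1 fa)"
  by (simp add: fsmult_def fun_eq_iff algebra_simps)

lemma fsmult_minus_one: "fsmult (-1) x = - (x :: 'k::comm_ring_1 fa)"
  by (simp add: fsmult_def fun_eq_iff)

lemma fin_supp_iff_finite_supp: "fin_supp f \<longleftrightarrow> finite (supp f)"
  by (simp add: fin_supp_def supp_def)

lemma fin_supp_0 [simp]: "fin_supp (0 :: 'k::zero fa)"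
  by (simp add: fin_supp_def)

lemma fin_supp_fmon [simp]: "fin_supp (fmon w :: 'k::zero_neq_one fa)"
  by (simp add: fin_supp_def fmon_def)

lemma supp_fmon: "supp (fmon w :: 'k::zero_neq_one fa) = {w}"
  by (simp add: supp_def fmon_def)

lemma supp_add_subset: "supp (f + g) \<subseteq> supp f \<union> supp (g :: 'k::comm_monoid_add fa)"
  by (auto simp: supp_def)

lemma supp_fsmult_subset: "supp (fsmult c f) \<subseteq> supp (f :: 'k::mult_zero fa)"
  by (auto simp: supp_def fsmult_def)

lemma fin_supp_add [simp]: "fin_supp f \<Longrightarrow> fin_supp g \<Longrightarrow> fin_supp (f + g :: 'k::comm_monoid_add fa)"
  using supp_add_subset[of f g] by (auto simp: fin_supp_iff_finite_supp intro: finite_subset)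

lemma fin_supp_fsmult [simp]: "fin_supp f \<Longrightarrow> fin_supp (fsmult c f :: 'k::mult_zero fa)"
  using supp_fsmult_subset[of c f] by (auto simp: fin_supp_iff_finite_supp intro: finite_subset)

lemma fin_supp_uminus [simp]: "fin_supp (- f) \<longleftrightarrow> fin_supp (f :: 'k::ab_group_add fa)"
  by (simp add: fin_supp_def)

lemma fin_supp_diff [simp]: "fin_supp f \<Longrightarrow> fin_supp g \<Longrightarrow> fin_supp (f - g :: 'k::ab_group_add fa)"
  using fin_supp_add[of f "- g"] by simp

lemma sum_fun_apply: "(\<Sum>a\<in>A. h a) w = (\<Sum>a\<in>A. h a w)"
  by (induction A rule: infinite_finite_induct) auto

lemma fa_eq_sum_fmon:
  assumes "fin_supp (f :: 'k::comm_ring_1 fa)"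
  shows "f = (\<Sum>w\<in>supp f. fsmult (f w) (fmon w))"
proof
  fix u
  have "(\<Sum>w\<in>supp f. fsmult (f w) (fmon w)) u = (\<Sum>w\<in>supp f. if w = u then f u else 0)"
    unfolding sum_fun_apply by (rule sum.cong) (auto simp: fsmult_def fmon_def)
  also have "\<dots> = f u"
    using assms by (simp add: fin_supp_iff_finite_supp supp_def)
  finally show "f u = (\<Sum>w\<in>supp f. fsmult (f w) (fmon w)) u" by simp
qed

lemma fmul_fmon_left:
  "fmul (fmon u) x w = (if take (length u) w = u then x (drop (length u) w) else 0)"
proof -
  have "fmul (fmon u) x w = (\<Sum>i\<le>length w. if i = length u then
          (if take (length u) w = u then x (drop (length u) w) else 0) else 0)"
    unfolding fmul_def by (rule sum.cong) (auto simp: fmon_def dest: arg_cong[of _ _ length])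
  then show ?thesis
    by (auto dest: arg_cong[of _ _ length])
qed

lemma fmul_fmon_right:
  "fmul x (fmon v) w = (if length v \<le> length w \<and> drop (length w - length v) w = v
                        then x (take (length w - length v) w) else 0)"
proof -
  have "fmul x (fmon v) w = (\<Sum>i\<le>length w. if i = length w - length v then
          (if length v \<le> length w \<and> drop (length w - length v) w = v
           then x (take (length w - length v) w) else 0) else 0)"
    unfolding fmul_def by (rule sum.cong) (auto simp: fmon_def dest: arg_cong[of _ _ length])
  then show ?thesis
    by simp
qed

definition sandwich :: "gen list \<Rightarrow> gen list \<Rightarrow> 'k::comm_semiring_1 fa \<Rightarrow> 'k fa" where
  "sandwich u v x = fmul (fmon u) (fmul x (fmon v))"

lemma fmul_fmon_eq_sandwich:
  "fmul (fmon u) x = sandwich u [] x" "fmul x (fmon v) = sandwich [] v x"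
  by (simp_all add: sandwich_def fun_eq_iff fmul_fmon_left fmul_fmon_right)

lemma sandwich_append [simp]: "sandwich u v x (u @ z @ v) = x z"
  by (simp add: sandwich_def fmul_fmon_left fmul_fmon_right)

lemma sandwich_eq_0:
  assumes "\<nexists>z. w = u @ z @ v"
  shows "sandwich u v x w = 0"
proof (rule ccontr)
  assume "sandwich u v x w \<noteq> 0"
  then have "take (length u) w = u" and "length v \<le> length (drop (length u) w)"
    and "drop (length (drop (length u) w) - length v) (drop (length u) w) = v"
    by (auto simp: sandwich_def fmul_fmon_left fmul_fmon_right split: if_splits)
  then have "w = u @ take (length (drop (length u) w) - length v) (drop (length u) w) @ v"
    by (metis append_take_drop_id)
  with assms show False by blast
qed

lemma sandwich_apply:
  "sandwich u v x w = (if \<exists>z. w = u @ z @ v then x (THE z. w = u @ z @ v) else 0)"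
  by (auto simp: sandwich_eq_0)

lemma sandwich_add [simp]: "sandwich u v (x + y) = sandwich u v x + sandwich u v y"
  by (simp add: sandwich_apply fun_eq_iff)

lemma sandwich_diff [simp]:
  "sandwich u v (x - y) = sandwich u v x - sandwich u v (y :: 'k::comm_ring_1 fa)"
  by (simp add: sandwich_apply fun_eq_iff)

lemma sandwich_fsmult [simp]: "sandwich u v (fsmult c x) = fsmult c (sandwich u v x)"
  by (simp add: sandwich_apply fun_eq_iff fsmult_def)

lemma sandwich_fmon [simp]: "sandwich u v (fmon w) = fmon (u @ w @ v)"
  by (auto simp: sandwich_apply fun_eq_iff fmon_def)

lemma sandwich_sum: "sandwich u v (\<Sum>a\<in>A. h a) = (\<Sum>a\<in>A. sandwich u v (h a))"
proof (induction A rule: infinite_finite_induct)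
  case (insert a A)
  have "sandwich u v (\<Sum>a\<in>insert a A. h a) = sandwich u v (h a + (\<Sum>a\<in>A. h a))"
    using insert.hyps by (subst sum.insert) auto
  also have "\<dots> = sandwich u v (h a) + (\<Sum>a\<in>A. sandwich u v (h a))"
    by (subst sandwich_add) (rule arg_cong[OF insert.IH])
  also have "\<dots> = (\<Sum>a\<in>insert a A. sandwich u v (h a))"
    using insert.hyps by (subst sum.insert) auto
  finally show ?case .
qed (simp_all add: sandwich_apply)

lemma sandwich_sandwich: "sandwich u v (sandwich u' v' x) = sandwich (u @ u') (v' @ v) x"
  by (auto simp: sandwich_apply fun_eq_iff)

lemma supp_sandwich: "supp (sandwich u v x) = (\<lambda>z. u @ z @ v) ` supp x"
  by (auto simp: supp_def sandwich_apply)

lemma fin_supp_sandwich [simp]: "fin_supp x \<Longrightarrow> fin_supp (sandwich u v x)"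
  by (simp add: fin_supp_iff_finite_supp supp_sandwich)

lemma sandwich_Nil [simp]: "sandwich [] [] x = x"
  by (simp add: fun_eq_iff sandwich_def fmul_fmon_left fmul_fmon_right)

lemma gen_idx_simps [simp]: "gen_idx (Om a) = a" "gen_idx (Ph a) = a" "gen_idx (Ps a) = a"
  by (simp_all add: gen_idx_def)

lemma valid_word_Nil [simp]: "valid_word n []"
  by (simp add: valid_word_def)

lemma valid_word_Cons [simp]: "valid_word n (g # w) \<longleftrightarrow> gen_idx g \<in> {1..n} \<and> valid_word n w"
  by (simp add: valid_word_def)

lemma valid_word_append [simp]: "valid_word n (u @ w) \<longleftrightarrow> valid_word n u \<and> valid_word n w"
  by (auto simp: valid_word_def)

lemma valid_word_replicate [simp]:
  "valid_word n (replicate k g) \<longleftrightarrow> k = 0 \<or> gen_idx g \<in> {1..n}"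
  by (auto simp: valid_word_def)

definition site_word :: "nat \<Rightarrow> nat \<Rightarrow> nat \<Rightarrow> nat \<Rightarrow> gen list" where
  "site_word a p d v = replicate p (Ph a) @ replicate d (Ps a) @ replicate v (Om a)"

definition ord_segment ::
  "(nat \<Rightarrow> nat) \<Rightarrow> (nat \<Rightarrow> nat) \<Rightarrow> (nat \<Rightarrow> nat) \<Rightarrow> nat list \<Rightarrow> gen list" where
  "ord_segment p d v as = concat (map (\<lambda>a. site_word a (p a) (d a) (v a)) as)"

lemma valid_site_word [simp]: "a \<in> {1..n} \<Longrightarrow> valid_word n (site_word a p d v)"
  by (simp add: site_word_def)

lemma valid_ord_segment: "set as \<subseteq> {1..n} \<Longrightarrow> valid_word n (ord_segment p d v as)"
  by (induction as) (auto simp: ord_segment_def)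

lemma gen_idx_in_site_word: "g \<in> set (site_word a p d v) \<Longrightarrow> gen_idx g = a"
  by (auto simp: site_word_def)

lemma ord_segment_cong:
  "(\<And>a. a \<in> set as \<Longrightarrow> p a = p' a \<and> d a = d' a \<and> v a = v' a) \<Longrightarrow>
    ord_segment p d v as = ord_segment p' d' v' as"
  unfolding ord_segment_def by (intro arg_cong[where f = concat] map_cong) auto

lemma ord_word_eq_ord_segment: "ord_word n p d v = ord_segment p d v [1..<n+1]"
  by (simp add: ord_word_def ord_segment_def site_word_def)

lemma ord_word_split:
  assumes "c \<in> {1..n}"
  shows "ord_word n p d v =
    ord_segment p d v [1..<c] @ site_word c (p c) (d c) (v c) @ ord_segment p d v [Suc c..<n+1]"
proof -
  have "[1..<n+1] = [1..<c] @ [c..<n+1]"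
    using assms upt_add_eq_append[of 1 c "n + 1 - c"] by auto
  also have "[c..<n+1] = c # [Suc c..<n+1]"
    using assms by (simp add: upt_conv_Cons)
  finally have "[1..<n+1] = [1..<c] @ c # [Suc c..<n+1]" .
  then show ?thesis
    by (simp add: ord_word_eq_ord_segment ord_segment_def)
qed

lemma count_list_replicate: "count_list (replicate k x) y = (if x = y then k else 0)"
  by (induction k) auto

lemma count_list_site_word:
  "count_list (site_word a p d v) (Ph b) = (if a = b then p else 0)"
  "count_list (site_word a p d v) (Ps b) = (if a = b then d else 0)"
  "count_list (site_word a p d v) (Om b) = (if a = b then v else 0)"
  by (auto simp: site_word_def count_list_replicate)

lemma count_list_ord_segment:
  assumes "distinct as"
  shows "count_list (ord_segment p d v as) (Ph b) = (if b \<in> set as then p b else 0)"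
    and "count_list (ord_segment p d v as) (Ps b) = (if b \<in> set as then d b else 0)"
    and "count_list (ord_segment p d v as) (Om b) = (if b \<in> set as then v b else 0)"
  using assms by (induction as) (auto simp: ord_segment_def count_list_site_word)

lemma cl_basis_word_decode:
  assumes "w \<in> cl_basis_words m n"
  shows "w = ord_word n (\<lambda>a. count_list w (Ph a)) (\<lambda>a. count_list w (Ps a)) (\<lambda>a. count_list w (Om a))"
    and "a \<in> {1..n} \<Longrightarrow> count_list w (Ph a) \<le> 1 \<and> count_list w (Ps a) \<le> 1 \<and> count_list w (Om a) < m"
proof -
  obtain p d v where w: "w = ord_word n p d v" and bounds: "\<forall>a\<in>{1..n}. p a \<le> 1 \<and> d a \<le> 1 \<and> v a < m"
    using assms by (auto simp: cl_basis_words_def)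
  have counts: "count_list w (Ph a) = p a \<and> count_list w (Ps a) = d a \<and> count_list w (Om a) = v a"
    if "a \<in> {1..n}" for a
    using that unfolding w ord_word_eq_ord_segment by (simp add: count_list_ord_segment)
  show "w = ord_word n (\<lambda>a. count_list w (Ph a)) (\<lambda>a. count_list w (Ps a)) (\<lambda>a. count_list w (Om a))"
    unfolding ord_word_eq_ord_segment by (subst w, unfold ord_word_eq_ord_segment)
      (rule ord_segment_cong, use counts in auto)
  show "a \<in> {1..n} \<Longrightarrow> count_list w (Ph a) \<le> 1 \<and> count_list w (Ps a) \<le> 1 \<and> count_list w (Om a) < m"
    using counts bounds by auto
qed

section \<open>Congruence modulo the defining relations\<close>

context
  fixes q :: "'k::field" and m n :: nat
begin

lemma cl_ideal_0 [simp]: "0 \<in> cl_ideal q m n"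
  using cl_ideal.zero[of q m n] by (simp add: zero_fun_def)

lemma cl_ideal_add: "x \<in> cl_ideal q m n \<Longrightarrow> y \<in> cl_ideal q m n \<Longrightarrow> x + y \<in> cl_ideal q m n"
  using cl_ideal.add[of x q m n y] by simp

lemma cl_ideal_uminus: "x \<in> cl_ideal q m n \<Longrightarrow> - x \<in> cl_ideal q m n"
  by (metis cl_ideal.smult fsmult_minus_one)

lemma cl_ideal_sandwich:
  "x \<in> cl_ideal q m n \<Longrightarrow> valid_word n u \<Longrightarrow> valid_word n v \<Longrightarrow> sandwich u v x \<in> cl_ideal q m n"
  unfolding sandwich_def by (intro cl_ideal.lmul cl_ideal.rmul)

definition cl_cong :: "'k fa \<Rightarrow> 'k fa \<Rightarrow> bool" where
  "cl_cong x y \<longleftrightarrow> x - y \<in> cl_ideal q m n"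

lemma cl_cong_refl [simp]: "cl_cong x x"
  by (simp add: cl_cong_def)

lemma cl_cong_sym: "cl_cong x y \<Longrightarrow> cl_cong y x"
  unfolding cl_cong_def by (metis cl_ideal_uminus minus_diff_eq)

lemma cl_cong_trans [trans]: "cl_cong x y \<Longrightarrow> cl_cong y z \<Longrightarrow> cl_cong x z"
proof -
  have "(x - y) + (y - z) = x - z"
    by simp
  then show "cl_cong x y \<Longrightarrow> cl_cong y z \<Longrightarrow> cl_cong x z"
    unfolding cl_cong_def by (metis cl_ideal_add)
qed

lemma cl_cong_add: "cl_cong x x' \<Longrightarrow> cl_cong y y' \<Longrightarrow> cl_cong (x + y) (x' + y')"
proof -
  have "(x - x') + (y - y') = (x + y) - (x' + y')"
    by simp
  then show "cl_cong x x' \<Longrightarrow> cl_cong y y' \<Longrightarrow> cl_cong (x + y) (x' + y')"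
    unfolding cl_cong_def by (metis cl_ideal_add)
qed

lemma cl_cong_fsmult: "cl_cong x x' \<Longrightarrow> cl_cong (fsmult c x) (fsmult c x')"
  unfolding cl_cong_def by (metis cl_ideal.smult fsmult_diff)

lemma cl_cong_sandwich:
  "cl_cong x x' \<Longrightarrow> valid_word n u \<Longrightarrow> valid_word n v \<Longrightarrow> cl_cong (sandwich u v x) (sandwich u v x')"
  unfolding cl_cong_def by (metis cl_ideal_sandwich sandwich_diff)

lemma cl_cong_0_right: "cl_cong x 0 \<longleftrightarrow> x \<in> cl_ideal q m n"
  by (simp add: cl_cong_def)

lemma cl_cong_relI: "fsub x y \<in> cl_rels q m n \<Longrightarrow> cl_cong x y"
  unfolding cl_cong_def by (simp add: cl_ideal.rel)

lemma cl_cong_anti_relI: "fadd x y \<in> cl_rels q m n \<Longrightarrow> cl_cong x (- y)"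
  unfolding cl_cong_def by (simp add: cl_ideal.rel)

lemma cl_cong_Om_Om:
  "a \<in> {1..n} \<Longrightarrow> b \<in> {1..n} \<Longrightarrow> cl_cong (fmon [Om a, Om b]) (fmon [Om b, Om a])"
  by (rule cl_cong_relI, unfold cl_rels_def) (rule UN_I[of a], simp, rule UN_I[of b], simp_all)

lemma cl_cong_Om_Ph: "a \<in> {1..n} \<Longrightarrow> b \<in> {1..n} \<Longrightarrow>
    cl_cong (fmon [Om a, Ph b]) (fsmult (if a = b then q else 1) (fmon [Ph b, Om a]))"
  by (rule cl_cong_relI, unfold cl_rels_def) (rule UN_I[of a], simp, rule UN_I[of b], simp_all)

lemma cl_cong_Om_Ps: "a \<in> {1..n} \<Longrightarrow> b \<in> {1..n} \<Longrightarrow>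
    cl_cong (fmon [Om a, Ps b]) (fsmult (if a = b then inverse q else 1) (fmon [Ps b, Om a]))"
  by (rule cl_cong_relI, unfold cl_rels_def) (rule UN_I[of a], simp, rule UN_I[of b], simp_all)

lemma cl_cong_Ph_Ph:
  "a \<in> {1..n} \<Longrightarrow> b \<in> {1..n} \<Longrightarrow> cl_cong (fmon [Ph a, Ph b]) (- fmon [Ph b, Ph a])"
  by (rule cl_cong_anti_relI, unfold cl_rels_def) (rule UN_I[of a], simp, rule UN_I[of b], simp_all)

lemma cl_cong_Ps_Ps:
  "a \<in> {1..n} \<Longrightarrow> b \<in> {1..n} \<Longrightarrow> cl_cong (fmon [Ps a, Ps b]) (- fmon [Ps b, Ps a])"
  by (rule cl_cong_anti_relI, unfold cl_rels_def) (rule UN_I[of a], simp, rule UN_I[of b], simp_all)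

lemma cl_cong_Ph_Ps: "a \<in> {1..n} \<Longrightarrow> b \<in> {1..n} \<Longrightarrow> a \<noteq> b \<Longrightarrow>
    cl_cong (fmon [Ph a, Ps b]) (- fmon [Ps b, Ph a])"
  by (rule cl_cong_anti_relI, unfold cl_rels_def) (rule UN_I[of a], simp, rule UN_I[of b], simp_all)

lemma cl_cong_Ps_Ph: "a \<in> {1..n} \<Longrightarrow> b \<in> {1..n} \<Longrightarrow> a \<noteq> b \<Longrightarrow>
    cl_cong (fmon [Ps b, Ph a]) (- fmon [Ph a, Ps b])"
  using cl_cong_Ph_Ps[of a b] unfolding cl_cong_def
  by (simp add: add.commute)

lemma cl_cong_Ps_Ph_same:
  assumes "a \<in> {1..n}"
  shows "cl_cong (fmon [Ps a, Ph a]) (fmon [] - fmon [Ph a, Ps a])"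
proof -
  have "cl_cong (fmon [Ph a, Ps a] + fmon [Ps a, Ph a]) (fmon [])"
    by (rule cl_cong_relI, unfold cl_rels_def) (rule UN_I[OF assms], rule UN_I[OF assms], simp)
  then show ?thesis
    unfolding cl_cong_def by (simp add: algebra_simps)
qed

lemma cl_cong_Om_power: "a \<in> {1..n} \<Longrightarrow>
    cl_cong (fmon (replicate m (Om a))) (fmon [Ph a, Ps a] + fsmult (inverse q ^ m) (fmon [Ps a, Ph a]))"
  by (rule cl_cong_sym, rule cl_cong_relI, unfold cl_rels_def)
    (rule UN_I[of a], simp, rule UN_I[of a], simp_all)

lemma cl_cong_swap:
  assumes "gen_idx x \<in> {1..n}" "gen_idx y \<in> {1..n}" "gen_idx x \<noteq> gen_idx y"
  shows "\<exists>e. cl_cong (fmon [x, y]) (fsmult e (fmon [y, x]))"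
proof (cases x; cases y)
  fix a b
  assume "x = Om a" "y = Om b"
  then show ?thesis using cl_cong_Om_Om[of a b] assms by (intro exI[of _ 1]) simp
next
  fix a b
  assume "x = Om a" "y = Ph b"
  then show ?thesis using cl_cong_Om_Ph[of a b] assms by (intro exI[of _ 1]) simp
next
  fix a b
  assume "x = Om a" "y = Ps b"
  then show ?thesis using cl_cong_Om_Ps[of a b] assms by (intro exI[of _ 1]) simp
next
  fix a b
  assume "x = Ph a" "y = Om b"
  then show ?thesis using cl_cong_Om_Ph[of b a] assms by (intro exI[of _ 1]) (simp add: cl_cong_sym)
next
  fix a b
  assume "x = Ph a" "y = Ph b"
  then show ?thesis using cl_cong_Ph_Ph[of a b] assms by (intro exI[of _ "-1"]) (simp add: fsmult_minus_one)
next
  fix a b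
  assume "x = Ph a" "y = Ps b"
  then show ?thesis using cl_cong_Ph_Ps[of a b] assms by (intro exI[of _ "-1"]) (simp add: fsmult_minus_one)
next
  fix a b
  assume "x = Ps a" "y = Om b"
  then show ?thesis using cl_cong_Om_Ps[of b a] assms by (intro exI[of _ 1]) (simp add: cl_cong_sym)
next
  fix a b
  assume "x = Ps a" "y = Ph b"
  then show ?thesis using cl_cong_Ps_Ph[of b a] assms by (intro exI[of _ "-1"]) (simp add: fsmult_minus_one)
next
  fix a b
  assume "x = Ps a" "y = Ps b"
  then show ?thesis using cl_cong_Ps_Ps[of a b] assms by (intro exI[of _ "-1"]) (simp add: fsmult_minus_one)
qed

lemma cl_cong_move_past:
  assumes "gen_idx g \<in> {1..n}" "valid_word n A" "valid_word n W" "\<forall>x\<in>set A. gen_idx x \<noteq> gen_idx g"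
    and "valid_word n u"
  shows "\<exists>e. cl_cong (fmon (u @ g # A @ W)) (fsmult e (fmon (u @ A @ g # W)))"
  using assms(2,4,5)
proof (induction A arbitrary: u)
  case Nil
  then show ?case
    by (intro exI[of _ 1]) simp
next
  case (Cons x A)
  obtain e1 where "cl_cong (fmon [g, x]) (fsmult e1 (fmon [x, g]))"
    using cl_cong_swap[of g x] assms(1) Cons.prems by auto
  then have "cl_cong (sandwich u (A @ W) (fmon [g, x])) (sandwich u (A @ W) (fsmult e1 (fmon [x, g])))"
    using Cons.prems assms(3) by (intro cl_cong_sandwich) auto
  then have swap: "cl_cong (fmon (u @ g # x # A @ W)) (fsmult e1 (fmon ((u @ [x]) @ g # A @ W)))"
    by simp
  obtain e2 where "cl_cong (fmon ((u @ [x]) @ g # A @ W)) (fsmult e2 (fmon ((u @ [x]) @ A @ g # W)))"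
    using Cons.IH[of "u @ [x]"] Cons.prems by auto
  from cl_cong_trans[OF swap cl_cong_fsmult[OF this]]
  show ?case
    by (intro exI[of _ "e1 * e2"]) simp
qed

lemma fermion_square_in_cl_ideal:
  assumes "(2::'k) \<noteq> 0" "g \<in> {Ph c, Ps c}" "c \<in> {1..n}" "valid_word n u" "valid_word n v"
  shows "fmon (u @ g # g # v) \<in> cl_ideal q m n"
proof -
  have "cl_cong (fmon [g, g]) (- fmon [g, g])"
    using assms(2,3) cl_cong_Ph_Ph cl_cong_Ps_Ps by blast
  then have "fsmult (inverse 2) (fmon [g, g] + fmon [g, g]) \<in> cl_ideal q m n"
    unfolding cl_cong_def by (simp add: cl_ideal.smult)
  also have "fsmult (inverse 2) (fmon [g, g] + fmon [g, g]) = (fmon [g, g] :: 'k fa)"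
    using assms(1) by (simp add: fsmult_def fun_eq_iff field_simps)
  finally show ?thesis
    using cl_ideal_sandwich[of "fmon [g, g]" u v] assms(4,5) by simp
qed

section \<open>Spanning\<close>

definition reduces_to :: "gen list set \<Rightarrow> 'k fa \<Rightarrow> bool" where
  "reduces_to T x \<longleftrightarrow> (\<exists>g. fin_supp g \<and> supp g \<subseteq> T \<and> cl_cong x g)"

lemma reduces_to_fmon: "w \<in> T \<Longrightarrow> reduces_to T (fmon w)"
  unfolding reduces_to_def by (intro exI[of _ "fmon w"]) (simp add: supp_fmon)

lemma reduces_to_cong: "cl_cong x y \<Longrightarrow> reduces_to T y \<Longrightarrow> reduces_to T x"
  unfolding reduces_to_def by (meson cl_cong_trans)

lemma reduces_to_ideal: "x \<in> cl_ideal q m n \<Longrightarrow> reduces_to T x"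
  unfolding reduces_to_def by (rule exI[of _ 0]) (simp add: supp_def cl_cong_0_right)

lemma reduces_to_add:
  assumes "reduces_to T x" "reduces_to T y"
  shows "reduces_to T (x + y)"
proof -
  obtain g h where g: "fin_supp g" "supp g \<subseteq> T" "cl_cong x g"
    and h: "fin_supp h" "supp h \<subseteq> T" "cl_cong y h"
    using assms unfolding reduces_to_def by blast
  have "supp (g + h) \<subseteq> T"
    using g(2) h(2) supp_add_subset[of g h] by blast
  with g h show ?thesis
    unfolding reduces_to_def by (intro exI[of _ "g + h"]) (simp add: cl_cong_add)
qed

lemma reduces_to_fsmult:
  assumes "reduces_to T x"
  shows "reduces_to T (fsmult c x)"
proof -
  obtain g where g: "fin_supp g" "supp g \<subseteq> T" "cl_cong x g"
    using assms unfolding reduces_to_def by blast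
  have "supp (fsmult c g) \<subseteq> T"
    using g(2) supp_fsmult_subset[of c g] by blast
  with g show ?thesis
    unfolding reduces_to_def by (intro exI[of _ "fsmult c g"]) (simp add: cl_cong_fsmult)
qed

lemma reduces_to_diff: "reduces_to T x \<Longrightarrow> reduces_to T y \<Longrightarrow> reduces_to T (x - y)"
  by (metis reduces_to_add reduces_to_fsmult fsmult_minus_one diff_conv_add_uminus)

lemma reduces_to_sum: "(\<And>a. a \<in> A \<Longrightarrow> reduces_to T (h a)) \<Longrightarrow> reduces_to T (\<Sum>a\<in>A. h a)"
  by (induction A rule: infinite_finite_induct)
    (auto intro: reduces_to_add reduces_to_ideal)

lemma reduces_to_sandwich:
  assumes "reduces_to L x" "valid_word n u" "valid_word n v" "\<And>w. w \<in> L \<Longrightarrow> u @ w @ v \<in> T"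
  shows "reduces_to T (sandwich u v x)"
proof -
  obtain g where g: "fin_supp g" "supp g \<subseteq> L" "cl_cong x g"
    using assms(1) unfolding reduces_to_def by blast
  have "supp (sandwich u v g) \<subseteq> T"
    using g(2) assms(4) by (auto simp: supp_sandwich)
  with g assms(2,3) show ?thesis
    unfolding reduces_to_def by (intro exI[of _ "sandwich u v g"]) (simp add: cl_cong_sandwich)
qed

lemma reduces_to_lmul:
  assumes "gen_idx g \<in> {1..n}" "\<And>b. b \<in> T \<Longrightarrow> reduces_to T' (fmon (g # b))" "reduces_to T x"
  shows "reduces_to T' (sandwich [g] [] x)"
proof -
  obtain h where h: "fin_supp h" "supp h \<subseteq> T" "cl_cong x h"
    using assms(3) unfolding reduces_to_def by blast
  have "cl_cong (sandwich [g] [] x) (sandwich [g] [] h)"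
    using h(3) assms(1) by (intro cl_cong_sandwich) auto
  moreover have "sandwich [g] [] h = (\<Sum>b\<in>supp h. fsmult (h b) (fmon (g # b)))"
    by (subst fa_eq_sum_fmon[OF h(1)]) (simp add: sandwich_sum)
  moreover have "reduces_to T' (\<Sum>b\<in>supp h. fsmult (h b) (fmon (g # b)))"
    using h(2) assms(2) by (intro reduces_to_sum reduces_to_fsmult) auto
  ultimately show ?thesis
    using reduces_to_cong by auto
qed

definition site_words :: "nat \<Rightarrow> gen list set" where
  "site_words c = {site_word c p d v | p d v. p \<le> 1 \<and> d \<le> 1 \<and> v < m}"

lemma reduces_to_site_word:
  "p \<le> 1 \<Longrightarrow> d \<le> 1 \<Longrightarrow> v < m \<Longrightarrow> reduces_to (site_words c) (fmon (site_word c p d v))"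
  by (rule reduces_to_fmon) (auto simp: site_words_def)

lemma Ph_site_word_reduces:
  assumes "(2::'k) \<noteq> 0" "c \<in> {1..n}" "p \<le> 1" "d \<le> 1" "v < m"
  shows "reduces_to (site_words c) (fmon (Ph c # site_word c p d v))"
proof (cases "p = 0")
  case True
  then have "Ph c # site_word c p d v = site_word c 1 d v"
    by (simp add: site_word_def)
  then show ?thesis
    using assms reduces_to_site_word by simp
next
  case False
  with assms(3) have "p = 1"
    by simp
  then have "Ph c # site_word c p d v = [] @ Ph c # Ph c # site_word c 0 d v"
    by (simp add: site_word_def)
  then show ?thesis
    using assms fermion_square_in_cl_ideal[of "Ph c" c "[]"] reduces_to_ideal by simp
qed

lemma Ps_empty_site_word_reduces:
  assumes "(2::'k) \<noteq> 0" "c \<in> {1..n}" "d \<le> 1" "v < m"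
  shows "reduces_to (site_words c) (fmon (Ps c # site_word c 0 d v))"
proof (cases "d = 0")
  case True
  then have "Ps c # site_word c 0 d v = site_word c 0 1 v"
    by (simp add: site_word_def)
  then show ?thesis
    using assms reduces_to_site_word by simp
next
  case False
  with assms(3) have "d = 1"
    by simp
  then have "Ps c # site_word c 0 d v = [] @ Ps c # Ps c # site_word c 0 0 v"
    by (simp add: site_word_def)
  then show ?thesis
    using assms fermion_square_in_cl_ideal[of "Ps c" c "[]"] reduces_to_ideal by simp
qed

lemma Ps_site_word_reduces:
  assumes "(2::'k) \<noteq> 0" "c \<in> {1..n}" "p \<le> 1" "d \<le> 1" "v < m"
  shows "reduces_to (site_words c) (fmon (Ps c # site_word c p d v))"
proof (cases "p = 0")
  case True
  then show ?thesis
    using Ps_empty_site_word_reduces assms by simp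
next
  case False
  with assms(3) have p: "p = 1"
    by simp
  let ?R = "site_word c 0 d v"
  have "cl_cong (sandwich [] ?R (fmon [Ps c, Ph c])) (sandwich [] ?R (fmon [] - fmon [Ph c, Ps c]))"
    using assms(2) by (intro cl_cong_sandwich cl_cong_Ps_Ph_same) auto
  then have cong: "cl_cong (fmon (Ps c # site_word c p d v)) (fmon ?R - sandwich [Ph c] [] (fmon (Ps c # ?R)))"
    using p by (simp add: site_word_def)
  have "reduces_to (site_words c) (fmon ?R)"
    using assms by (intro reduces_to_site_word) auto
  moreover have "reduces_to (site_words c) (sandwich [Ph c] [] (fmon (Ps c # ?R)))"
    using assms Ph_site_word_reduces Ps_empty_site_word_reduces
    by (intro reduces_to_lmul[where T = "site_words c"]) (auto simp: site_words_def)
  ultimately have "reduces_to (site_words c) (fmon ?R - sandwich [Ph c] [] (fmon (Ps c # ?R)))"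
    by (rule reduces_to_diff)
  then show ?thesis
    by (rule reduces_to_cong[OF cong])
qed

lemma reduces_to_fermion_prefix:
  assumes "(2::'k) \<noteq> 0" "c \<in> {1..n}" "set P \<subseteq> {Ph c, Ps c}" "reduces_to (site_words c) x"
  shows "reduces_to (site_words c) (sandwich P [] x)"
  using assms(3)
proof (induction P)
  case Nil
  then show ?case
    using assms(4) by simp
next
  case (Cons g P)
  have "\<And>b. b \<in> site_words c \<Longrightarrow> reduces_to (site_words c) (fmon (g # b))"
    using Cons.prems assms(1,2) Ph_site_word_reduces Ps_site_word_reduces
    by (auto simp: site_words_def)
  then have "reduces_to (site_words c) (sandwich [g] [] (sandwich P [] x))"
    using Cons assms(2) by (intro reduces_to_lmul) auto
  then show ?case
    by (simp add: sandwich_sandwich)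
qed

lemma site_word_Om_power_reduces:
  assumes "(2::'k) \<noteq> 0" "c \<in> {1..n}" "p \<le> 1" "d \<le> 1" "m \<ge> 1"
  shows "reduces_to (site_words c) (fmon (site_word c p d m))"
proof -
  let ?P = "replicate p (Ph c) @ replicate d (Ps c)"
  let ?x = "fmon [Ph c, Ps c] + fsmult (inverse q ^ m) (fmon [Ps c, Ph c])"
  have "cl_cong (sandwich ?P [] (fmon (replicate m (Om c)))) (sandwich ?P [] ?x)"
    using assms(2) by (intro cl_cong_sandwich cl_cong_Om_power) auto
  then have "cl_cong (fmon (site_word c p d m)) (sandwich ?P [] ?x)"
    by (simp add: site_word_def)
  moreover have "reduces_to (site_words c) ?x"
  proof (rule reduces_to_add)
    show "reduces_to (site_words c) (fmon [Ph c, Ps c])"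
      using reduces_to_site_word[of 1 1 0 c] assms(5) by (simp add: site_word_def)
    show "reduces_to (site_words c) (fsmult (inverse q ^ m) (fmon [Ps c, Ph c]))"
      using Ps_site_word_reduces[of c 1 0 0] assms by (intro reduces_to_fsmult) (simp add: site_word_def)
  qed
  then have "reduces_to (site_words c) (sandwich ?P [] ?x)"
    using assms(1,2) by (intro reduces_to_fermion_prefix) auto
  ultimately show ?thesis
    by (rule reduces_to_cong)
qed

lemma cl_cong_Om_site_word:
  assumes "c \<in> {1..n}" "p \<le> 1" "d \<le> 1"
  shows "cl_cong (fmon (Om c # site_word c p d v))
    (fsmult (q ^ p * inverse q ^ d) (fmon (site_word c p d (Suc v))))"
proof -
  have Om_Ph: "cl_cong (fmon (u @ Om c # Ph c # w)) (fsmult q (fmon (u @ Ph c # Om c # w)))"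
    if "valid_word n u" "valid_word n w" for u w
    using cl_cong_sandwich[OF cl_cong_Om_Ph[of c c] that] assms(1) by simp
  have Om_Ps: "cl_cong (fmon (u @ Om c # Ps c # w)) (fsmult (inverse q) (fmon (u @ Ps c # Om c # w)))"
    if "valid_word n u" "valid_word n w" for u w
    using cl_cong_sandwich[OF cl_cong_Om_Ps[of c c] that] assms(1) by simp
  consider "p = 0" "d = 0" | "p = 1" "d = 0" | "p = 0" "d = 1" | "p = 1" "d = 1"
    using assms(2,3) by linarith
  then show ?thesis
  proof cases
    case 1
    then show ?thesis by (simp add: site_word_def)
  next
    case 2
    then show ?thesis
      using Om_Ph[of "[]" "replicate v (Om c)"] assms(1) by (simp add: site_word_def)
  next
    case 3
    then show ?thesis
      using Om_Ps[of "[]" "replicate v (Om c)"] assms(1) by (simp add: site_word_def)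
  next
    case 4
    have "cl_cong (fmon (Om c # Ph c # Ps c # replicate v (Om c)))
        (fsmult q (fmon (Ph c # Om c # Ps c # replicate v (Om c))))"
      using Om_Ph[of "[]" "Ps c # replicate v (Om c)"] assms(1) by simp
    also have "cl_cong \<dots> (fsmult q (fsmult (inverse q) (fmon (Ph c # Ps c # Om c # replicate v (Om c)))))"
      using Om_Ps[of "[Ph c]" "replicate v (Om c)"] assms(1) by (intro cl_cong_fsmult) simp
    finally show ?thesis
      using 4 by (simp add: site_word_def)
  qed
qed

lemma Om_site_word_reduces:
  assumes "(2::'k) \<noteq> 0" "c \<in> {1..n}" "p \<le> 1" "d \<le> 1" "v < m"
  shows "reduces_to (site_words c) (fmon (Om c # site_word c p d v))"
proof -
  have "reduces_to (site_words c) (fmon (site_word c p d (Suc v)))"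
  proof (cases "Suc v < m")
    case True
    then show ?thesis
      using assms reduces_to_site_word by simp
  next
    case False
    with assms(5) have "Suc v = m"
      by simp
    then show ?thesis
      using site_word_Om_power_reduces assms by simp
  qed
  then have "reduces_to (site_words c) (fsmult (q ^ p * inverse q ^ d) (fmon (site_word c p d (Suc v))))"
    by (rule reduces_to_fsmult)
  then show ?thesis
    by (rule reduces_to_cong[OF cl_cong_Om_site_word[OF assms(2-4)]])
qed

lemma gen_site_word_reduces:
  assumes "(2::'k) \<noteq> 0" "gen_idx g = c" "c \<in> {1..n}" "p \<le> 1" "d \<le> 1" "v < m"
  shows "reduces_to (site_words c) (fmon (g # site_word c p d v))"
proof (cases g)
  case (Om a)
  then show ?thesis
    using assms Om_site_word_reduces by simp
next
  case (Ph a)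
  then show ?thesis
    using assms Ph_site_word_reduces by simp
next
  case (Ps a)
  then show ?thesis
    using assms Ps_site_word_reduces by simp
qed

lemma ord_word_in_basis:
  "(\<And>a. a \<in> {1..n} \<Longrightarrow> p a \<le> 1 \<and> d a \<le> 1 \<and> v a < m) \<Longrightarrow> ord_word n p d v \<in> cl_basis_words m n"
  unfolding cl_basis_words_def by blast

lemma site_words_into_basis:
  assumes "c \<in> {1..n}" "\<And>a. a \<in> {1..n} \<Longrightarrow> p a \<le> 1 \<and> d a \<le> 1 \<and> v a < m" "w \<in> site_words c"
  shows "ord_segment p d v [1..<c] @ w @ ord_segment p d v [Suc c..<n+1] \<in> cl_basis_words m n"
proof -
  obtain p' d' v' where w: "w = site_word c p' d' v'" "p' \<le> 1" "d' \<le> 1" "v' < m"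
    using assms(3) by (auto simp: site_words_def)
  have "ord_segment p d v [1..<c] = ord_segment (p(c := p')) (d(c := d')) (v(c := v')) [1..<c]"
    and "ord_segment p d v [Suc c..<n+1] = ord_segment (p(c := p')) (d(c := d')) (v(c := v')) [Suc c..<n+1]"
    by (rule ord_segment_cong; simp del: upt_Suc)+
  then have "ord_segment p d v [1..<c] @ w @ ord_segment p d v [Suc c..<n+1] =
      ord_word n (p(c := p')) (d(c := d')) (v(c := v'))"
    using ord_word_split[OF assms(1), of "p(c := p')" "d(c := d')" "v(c := v')"] w(1) by simp
  also have "\<dots> \<in> cl_basis_words m n"
    using assms(2) w(2-4) by (intro ord_word_in_basis) auto
  finally show ?thesis .
qed

lemma gen_basis_word_reduces:
  assumes "(2::'k) \<noteq> 0" "b \<in> cl_basis_words m n" "gen_idx g \<in> {1..n}"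
  shows "reduces_to (cl_basis_words m n) (fmon (g # b))"
proof -
  obtain p d v where b: "b = ord_word n p d v" and bounds: "\<forall>a\<in>{1..n}. p a \<le> 1 \<and> d a \<le> 1 \<and> v a < m"
    using assms(2) by (auto simp: cl_basis_words_def)
  define c where "c = gen_idx g"
  define A where "A = ord_segment p d v [1..<c]"
  define S where "S = site_word c (p c) (d c) (v c)"
  define C where "C = ord_segment p d v [Suc c..<n+1]"
  have c: "c \<in> {1..n}"
    using assms(3) by (simp add: c_def)
  have valid: "valid_word n A" "valid_word n S" "valid_word n C"
    using c by (auto simp: A_def S_def C_def intro!: valid_ord_segment)
  have "\<forall>x\<in>set A. gen_idx x \<noteq> gen_idx g"
    by (auto simp: A_def c_def ord_segment_def dest!: gen_idx_in_site_word)
  then obtain e where "cl_cong (fmon ([] @ g # A @ S @ C)) (fsmult e (fmon ([] @ A @ g # S @ C)))"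
    using cl_cong_move_past[of g A "S @ C" "[]"] assms(3) valid by auto
  moreover have "reduces_to (cl_basis_words m n) (sandwich A C (fmon (g # S)))"
  proof (rule reduces_to_sandwich)
    show "reduces_to (site_words c) (fmon (g # S))"
      unfolding S_def using assms(1) c bounds by (intro gen_site_word_reduces) (auto simp: c_def)
    show "w \<in> site_words c \<Longrightarrow> A @ w @ C \<in> cl_basis_words m n" for w
      unfolding A_def C_def using c bounds by (intro site_words_into_basis) auto
  qed (use valid in auto)
  then have "reduces_to (cl_basis_words m n) (fsmult e (fmon (A @ g # S @ C)))"
    by (intro reduces_to_fsmult) simp
  moreover have "b = A @ S @ C"
    unfolding b A_def S_def C_def by (rule ord_word_split[OF c])
  ultimately show ?thesis
    using reduces_to_cong by auto
qed

lemma valid_word_reduces: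
  assumes "(2::'k) \<noteq> 0" "m \<ge> 1" "valid_word n w"
  shows "reduces_to (cl_basis_words m n) (fmon w)"
  using assms(3)
proof (induction w)
  case Nil
  have "ord_word n (\<lambda>_. 0) (\<lambda>_. 0) (\<lambda>_. 0) \<in> cl_basis_words m n"
    using assms(2) by (intro ord_word_in_basis) auto
  moreover have "ord_word n (\<lambda>_. 0) (\<lambda>_. 0) (\<lambda>_. 0) = []"
    by (simp add: ord_word_def del: upt_Suc)
  ultimately show ?case
    by (simp add: reduces_to_fmon)
next
  case (Cons g w)
  then have "reduces_to (cl_basis_words m n) (sandwich [g] [] (fmon w))"
    using gen_basis_word_reduces[OF assms(1)] by (intro reduces_to_lmul) auto
  then show ?case
    by simp
qed

lemma cl_basis_words_span:
  assumes "(2::'k) \<noteq> 0" "m \<ge> 1" "fin_supp f" "\<forall>w\<in>supp f. valid_word n w"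
  shows "\<exists>g. fin_supp g \<and> supp g \<subseteq> cl_basis_words m n \<and> fsub f g \<in> cl_ideal q m n"
proof -
  have "reduces_to (cl_basis_words m n) (\<Sum>w\<in>supp f. fsmult (f w) (fmon w))"
    using assms by (intro reduces_to_sum reduces_to_fsmult valid_word_reduces) auto
  then show ?thesis
    using fa_eq_sum_fmon[OF assms(3)] by (simp add: reduces_to_def cl_cong_def)
qed

end

section \<open>A representation of the free algebra\<close>

text \<open>The state of a site is (occupation bit, reference bit, phase).\<close>

type_synonym site_state = "bool \<times> bool \<times> nat"
type_synonym state = "nat \<Rightarrow> site_state"

definition site_sign :: "site_state \<Rightarrow> 'k::comm_ring_1" where
  "site_sign x = (if fst x = fst (snd x) then 1 else -1)"

definition jw_sign :: "nat \<Rightarrow> state \<Rightarrow> 'k::comm_ring_1" where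
  "jw_sign c t = (\<Prod>a\<in>{1..<c}. site_sign (t a))"

text \<open>Phases l \<ge> m are fixed, so that \<omega>^m leaves the phase of every state unchanged,
  not only of those with l < m.\<close>

definition phase_succ :: "nat \<Rightarrow> nat \<Rightarrow> nat" where
  "phase_succ m l = (if l < m then Suc l mod m else l)"

lemma site_sign_square [simp]: "site_sign x * site_sign x = (1::'k::comm_ring_1)"
  by (simp add: site_sign_def)

lemma jw_sign_square [simp]: "jw_sign c t * jw_sign c t = (1::'k::comm_ring_1)"
  unfolding jw_sign_def prod.distrib[symmetric] by simp

lemma jw_sign_fun_upd:
  "jw_sign c (t(a := x)) =
    (if a \<in> {1..<c} then site_sign x * site_sign (t a) * jw_sign c t else (jw_sign c t :: 'k::comm_ring_1))"
proof (cases "a \<in> {1..<c}")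
  case True
  have "jw_sign c (t(a := x)) = site_sign x * (\<Prod>b\<in>{1..<c}-{a}. site_sign (t b))"
    unfolding jw_sign_def using True by (subst prod.remove[OF _ True]) (auto intro!: prod.cong)
  moreover have "jw_sign c t = site_sign (t a) * (\<Prod>b\<in>{1..<c}-{a}. site_sign (t b))"
    unfolding jw_sign_def using True by (subst prod.remove[OF _ True]) auto
  ultimately show ?thesis
    using True by (metis (no_types, lifting) mult.assoc mult.left_commute mult_1 site_sign_square)
next
  case False
  then show ?thesis
    unfolding jw_sign_def by (auto intro!: prod.cong)
qed

lemma phase_succ_funpow: "(phase_succ m ^^ k) l = (if l < m then (l + k) mod m else l)"
proof (induction k)
  case (Suc k)
  then show ?case
    by (cases "l < m") (simp_all add: phase_succ_def mod_Suc_eq)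
qed simp

context
  fixes q :: "'k::field" and m n :: nat
  assumes q_nonzero: "q \<noteq> 0"
begin

definition Om_weight :: "site_state \<Rightarrow> 'k" where
  "Om_weight x = (if fst x then inverse q else 1)"

definition gen_weight :: "gen \<Rightarrow> state \<Rightarrow> 'k" where
  "gen_weight g t = (case g of
      Ph c \<Rightarrow> (if fst (t c) then 0 else jw_sign c t)
    | Ps c \<Rightarrow> (if fst (t c) then jw_sign c t else 0)
    | Om c \<Rightarrow> Om_weight (t c))"

definition gen_move :: "gen \<Rightarrow> state \<Rightarrow> state" where
  "gen_move g t = (case g of
      Ph c \<Rightarrow> t(c := (True, snd (t c)))
    | Ps c \<Rightarrow> t(c := (False, snd (t c)))
    | Om c \<Rightarrow> t(c := (fst (t c), fst (snd (t c)), phase_succ m (snd (snd (t c))))))"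

fun word_act :: "gen list \<Rightarrow> (state \<Rightarrow> 'k) \<Rightarrow> state \<Rightarrow> 'k" where
  "word_act [] F t = F t"
| "word_act (g # w) F t = gen_weight g t * word_act w F (gen_move g t)"

lemma word_act_append: "word_act (u @ w) F = word_act u (word_act w F)"
proof
  show "word_act (u @ w) F t = word_act u (word_act w F) t" for t
    by (induction u arbitrary: t) auto
qed

lemma word_act_sum: "word_act u (\<lambda>s. \<Sum>i\<in>A. c i * G i s) t = (\<Sum>i\<in>A. c i * word_act u (G i) t)"
  by (induction u arbitrary: t) (auto simp: sum_distrib_left mult.left_commute)

lemma word_act_Nil [simp]: "word_act [] F = F"
  by (rule ext) simp

lemma word_act_0: "word_act u (\<lambda>_. 0) t = 0"
  by (induction u arbitrary: t) auto

definition act :: "'k fa \<Rightarrow> (state \<Rightarrow> 'k) \<Rightarrow> state \<Rightarrow> 'k" where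
  "act x F t = (\<Sum>w\<in>supp x. x w * word_act w F t)"

lemma act_eq_sum_superset: "finite A \<Longrightarrow> supp x \<subseteq> A \<Longrightarrow> act x F t = (\<Sum>w\<in>A. x w * word_act w F t)"
  unfolding act_def by (rule sum.mono_neutral_left) (auto simp: supp_def)

lemma act_add [simp]:
  assumes "fin_supp x" "fin_supp y"
  shows "act (x + y) F t = act x F t + act y F t"
proof -
  have fin: "finite (supp x \<union> supp y)"
    using assms by (simp add: fin_supp_iff_finite_supp)
  have "act (x + y) F t = (\<Sum>w\<in>supp x \<union> supp y. (x + y) w * word_act w F t)"
    using supp_add_subset by (rule act_eq_sum_superset[OF fin])
  also have "\<dots> = (\<Sum>w\<in>supp x \<union> supp y. x w * word_act w F t) + (\<Sum>w\<in>supp x \<union> supp y. y w * word_act w F t)"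
    by (simp add: distrib_right sum.distrib)
  also have "\<dots> = act x F t + act y F t"
    using act_eq_sum_superset[OF fin, of x] act_eq_sum_superset[OF fin, of y] by simp
  finally show ?thesis .
qed

lemma act_fsmult [simp]:
  assumes "fin_supp x"
  shows "act (fsmult c x) F t = c * act x F t"
proof -
  have "act (fsmult c x) F t = (\<Sum>w\<in>supp x. fsmult c x w * word_act w F t)"
    using assms supp_fsmult_subset by (intro act_eq_sum_superset) (simp_all add: fin_supp_iff_finite_supp)
  also have "\<dots> = c * act x F t"
    by (simp add: act_def sum_distrib_left fsmult_def mult.assoc)
  finally show ?thesis .
qed

lemma act_diff [simp]:
  assumes "fin_supp x" "fin_supp y"
  shows "act (x - y) F t = act x F t - act y F t"
proof -
  have "act (x - y) F t = act (x + fsmult (-1) y) F t"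
    by (simp add: fsmult_minus_one)
  also have "\<dots> = act x F t - act y F t"
    using assms by simp
  finally show ?thesis .
qed

lemma act_fmon [simp]: "act (fmon w) F t = word_act w F t"
  by (subst act_eq_sum_superset[of "{w}"]) (simp_all add: supp_fmon, simp add: fmon_def)

lemma act_sandwich:
  assumes "fin_supp x"
  shows "act (sandwich u v x) F t = word_act u (act x (word_act v F)) t"
proof -
  have "inj_on (\<lambda>w. u @ w @ v) (supp x)"
    by (auto intro: inj_onI)
  then have "act (sandwich u v x) F t = (\<Sum>w\<in>supp x. x w * word_act (u @ w @ v) F t)"
    unfolding act_def supp_sandwich by (simp add: sum.reindex)
  also have "\<dots> = word_act u (act x (word_act v F)) t"
    unfolding act_def word_act_append by (rule word_act_sum[symmetric])
  finally show ?thesis .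
qed

lemmas gen_action_simps = gen_weight_def gen_move_def Om_weight_def jw_sign_fun_upd site_sign_def
  fun_upd_twist fun_upd_upd fun_upd_same fun_upd_other

lemma word_act_Om_Om: "word_act [Om a, Om b] F t = word_act [Om b, Om a] F t"
proof -
  obtain i j l where "t a = (i, j, l)" by (cases "t a")
  moreover obtain i' j' l' where "t b = (i', j', l')" by (cases "t b")
  ultimately show ?thesis
    by (cases "a = b") (simp_all add: gen_action_simps del: fun_upd_apply)
qed

lemma word_act_Om_Ph:
  assumes "1 \<le> a" "1 \<le> b"
  shows "word_act [Om a, Ph b] F t = (if a = b then q else 1) * word_act [Ph b, Om a] F t"
proof -
  obtain i j l where "t a = (i, j, l)" by (cases "t a")
  moreover obtain i' j' l' where "t b = (i', j', l')" by (cases "t b")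
  ultimately show ?thesis
    using assms q_nonzero by (cases "a = b") (simp_all add: gen_action_simps del: fun_upd_apply)
qed

lemma word_act_Om_Ps:
  assumes "1 \<le> a" "1 \<le> b"
  shows "word_act [Om a, Ps b] F t = (if a = b then inverse q else 1) * word_act [Ps b, Om a] F t"
proof -
  obtain i j l where "t a = (i, j, l)" by (cases "t a")
  moreover obtain i' j' l' where "t b = (i', j', l')" by (cases "t b")
  ultimately show ?thesis
    using assms q_nonzero by (cases "a = b") (simp_all add: gen_action_simps del: fun_upd_apply)
qed

lemma word_act_Ph_Ph:
  assumes "1 \<le> a" "1 \<le> b"
  shows "word_act [Ph a, Ph b] F t + word_act [Ph b, Ph a] F t = 0"
proof -
  obtain i j l where "t a = (i, j, l)" by (cases "t a")
  moreover obtain i' j' l' where "t b = (i', j', l')" by (cases "t b")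
  ultimately show ?thesis
    using assms by (cases a b rule: linorder_cases) (simp_all add: gen_action_simps del: fun_upd_apply)
qed

lemma word_act_Ps_Ps:
  assumes "1 \<le> a" "1 \<le> b"
  shows "word_act [Ps a, Ps b] F t + word_act [Ps b, Ps a] F t = 0"
proof -
  obtain i j l where "t a = (i, j, l)" by (cases "t a")
  moreover obtain i' j' l' where "t b = (i', j', l')" by (cases "t b")
  ultimately show ?thesis
    using assms by (cases a b rule: linorder_cases) (simp_all add: gen_action_simps del: fun_upd_apply)
qed

lemma word_act_Ph_Ps:
  assumes "1 \<le> a" "1 \<le> b" "a \<noteq> b"
  shows "word_act [Ph a, Ps b] F t + word_act [Ps b, Ph a] F t = 0"
proof -
  obtain i j l where "t a = (i, j, l)" by (cases "t a")
  moreover obtain i' j' l' where "t b = (i', j', l')" by (cases "t b")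
  ultimately show ?thesis
    using assms by (cases a b rule: linorder_cases) (simp_all add: gen_action_simps del: fun_upd_apply)
qed

lemma word_act_Ph_Ps_same: "word_act [Ph a, Ps a] F t + word_act [Ps a, Ph a] F t = F t"
proof -
  obtain i j l where ta: "t a = (i, j, l)" by (cases "t a")
  then have same: "t(a := (i', j, l)) = t" if "i' = i" for i'
    using that by auto
  show ?thesis
    using ta by (simp add: same gen_weight_def gen_move_def jw_sign_fun_upd fun_upd_upd fun_upd_same
        mult.assoc[symmetric] del: fun_upd_apply)
qed

lemma word_act_Om_replicate: "word_act (replicate k (Om a)) F t =
    Om_weight (t a) ^ k * F (t(a := (fst (t a), fst (snd (t a)), (phase_succ m ^^ k) (snd (snd (t a))))))"
proof (induction k arbitrary: t)
  case (Suc k)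
  obtain i j l where "t a = (i, j, l)" by (cases "t a")
  then show ?case
    by (simp add: Suc gen_weight_def gen_move_def Om_weight_def funpow_Suc_right fun_upd_same
        del: funpow.simps fun_upd_apply)
qed simp

lemma word_act_Om_power:
  "word_act [Ph a, Ps a] F t + inverse q ^ m * word_act [Ps a, Ph a] F t = word_act (replicate m (Om a)) F t"
proof -
  obtain i j l where ta: "t a = (i, j, l)" by (cases "t a")
  then have same: "t(a := (i', j, l)) = t" if "i' = i" for i'
    using that by auto
  have "(phase_succ m ^^ m) l = l"
    by (simp add: phase_succ_funpow)
  then show ?thesis
    using ta by (simp add: same word_act_Om_replicate gen_weight_def gen_move_def jw_sign_fun_upd Om_weight_def
        fun_upd_upd fun_upd_same mult.assoc[symmetric] del: fun_upd_apply)
qed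

lemma word_act_Om_quadratic: "word_act (replicate (2 * m) (Om a)) F t
    - (1 + inverse q ^ m) * word_act (replicate m (Om a)) F t + inverse q ^ m * F t = 0"
proof -
  obtain i j l where ta: "t a = (i, j, l)" by (cases "t a")
  then have "t(a := (i, j, l)) = t"
    by auto
  moreover have "(phase_succ m ^^ m) l = l" "(phase_succ m ^^ (2 * m)) l = l"
    by (simp_all add: phase_succ_funpow)
  moreover have "inverse q ^ (2 * m) = inverse q ^ m * inverse q ^ m"
    by (simp add: mult_2 power_add)
  ultimately show ?thesis
    using ta by (simp add: word_act_Om_replicate Om_weight_def del: fun_upd_apply) (simp add: algebra_simps)
qed

definition acts_as_zero :: "'k fa \<Rightarrow> bool" where
  "acts_as_zero x \<longleftrightarrow> fin_supp x \<and> (\<forall>F t. act x F t = 0)"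

lemma cl_rels_act_as_zero: "r \<in> cl_rels q m n \<Longrightarrow> acts_as_zero r"
  unfolding cl_rels_def
  by (elim UN_E UnE insertE emptyE)
    (auto simp: acts_as_zero_def word_act_Om_Om word_act_Om_Ph word_act_Om_Ps word_act_Ph_Ph
      word_act_Ps_Ps word_act_Ph_Ps word_act_Ph_Ps_same word_act_Om_power word_act_Om_quadratic
      simp del: word_act.simps(2) split: if_splits)

lemma cl_ideal_act_as_zero: "x \<in> cl_ideal q m n \<Longrightarrow> acts_as_zero x"
proof (induction rule: cl_ideal.induct)
  case (rel r)
  then show ?case
    by (rule cl_rels_act_as_zero)
next
  case zero
  then show ?case
    by (simp add: acts_as_zero_def act_def supp_def fin_supp_def)
next
  case (add x y)
  then have "fin_supp x" "fin_supp y" "act x F t = 0" "act y F t = 0" for F t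
    by (auto simp: acts_as_zero_def)
  then show ?case
    unfolding acts_as_zero_def fadd_eq_plus by simp
next
  case (smult x c)
  then show ?case
    by (simp add: acts_as_zero_def)
next
  case (lmul x u)
  then have "fin_supp x" "act x G = (\<lambda>_. 0)" for G
    by (auto simp: acts_as_zero_def fun_eq_iff)
  then show ?case
    unfolding fmul_fmon_eq_sandwich acts_as_zero_def by (simp add: act_sandwich word_act_0)
next
  case (rmul x u)
  then have "fin_supp x" "act x G = (\<lambda>_. 0)" for G
    by (auto simp: acts_as_zero_def fun_eq_iff)
  then show ?case
    unfolding fmul_fmon_eq_sandwich acts_as_zero_def by (simp add: act_sandwich)
qed

section \<open>Linear independence\<close>

definition prod_state :: "(nat \<Rightarrow> site_state \<Rightarrow> 'k) \<Rightarrow> state \<Rightarrow> 'k" where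
  "prod_state f t = (\<Prod>a\<in>{1..n}. f a (t a))"

definition parity_even :: "(site_state \<Rightarrow> 'k) \<Rightarrow> bool" where
  "parity_even h \<longleftrightarrow> (\<forall>x. h x \<noteq> 0 \<longrightarrow> fst x = fst (snd x))"

definition loc_Ph :: "(site_state \<Rightarrow> 'k) \<Rightarrow> site_state \<Rightarrow> 'k" where
  "loc_Ph h x = (if fst x then 0 else h (True, snd x))"

definition loc_Ps :: "(site_state \<Rightarrow> 'k) \<Rightarrow> site_state \<Rightarrow> 'k" where
  "loc_Ps h x = (if fst x then h (False, snd x) else 0)"

definition loc_Om :: "(site_state \<Rightarrow> 'k) \<Rightarrow> site_state \<Rightarrow> 'k" where
  "loc_Om h x = Om_weight x * h (fst x, fst (snd x), phase_succ m (snd (snd x)))"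

lemma prod_state_fun_upd:
  "c \<in> {1..n} \<Longrightarrow> prod_state (f(c := h)) t = h (t c) * (\<Prod>a\<in>{1..n}-{c}. f a (t a))"
  unfolding prod_state_def by (subst prod.remove[of _ c]) (auto intro!: prod.cong)

lemma prod_state_state_upd:
  "c \<in> {1..n} \<Longrightarrow> prod_state f (t(c := x)) = f c x * (\<Prod>a\<in>{1..n}-{c}. f a (t a))"
  unfolding prod_state_def by (subst prod.remove[of _ c]) (auto intro!: prod.cong)

lemma jw_sign_parity_even:
  assumes "c \<in> {1..n}" "\<forall>a\<in>{1..<c}. parity_even (f a)"
  shows "jw_sign c t * (\<Prod>a\<in>{1..n}-{c}. f a (t a)) = (\<Prod>a\<in>{1..n}-{c}. f a (t a))"
proof (cases "\<forall>a\<in>{1..<c}. fst (t a) = fst (snd (t a))")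
  case True
  then have "jw_sign c t = (1::'k)"
    unfolding jw_sign_def site_sign_def by simp
  then show ?thesis
    by simp
next
  case False
  then obtain a where "a \<in> {1..<c}" "f a (t a) = 0"
    using assms(2) unfolding parity_even_def by blast
  with assms(1) have "(\<Prod>a\<in>{1..n}-{c}. f a (t a)) = 0"
    by (intro prod_zero) auto
  then show ?thesis
    by simp
qed

lemma word_act_Ph_prod_state:
  assumes "c \<in> {1..n}" "\<forall>a\<in>{1..<c}. parity_even (f a)"
  shows "word_act [Ph c] (prod_state f) = prod_state (f(c := loc_Ph (f c)))"
proof
  fix t :: state
  obtain i j l where tc: "t c = (i, j, l)" by (cases "t c")
  have "word_act [Ph c] (prod_state f) t = (if i then 0 else jw_sign c t * (f c (True, j, l) * (\<Prod>a\<in>{1..n}-{c}. f a (t a))))"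
    by (simp add: gen_weight_def gen_move_def tc prod_state_state_upd[OF assms(1)] del: fun_upd_apply)
  also have "\<dots> = prod_state (f(c := loc_Ph (f c))) t"
    using jw_sign_parity_even[OF assms, of t]
    by (auto simp: prod_state_fun_upd[OF assms(1)] loc_Ph_def tc mult.assoc[symmetric])
  finally show "word_act [Ph c] (prod_state f) t = prod_state (f(c := loc_Ph (f c))) t" .
qed

lemma word_act_Ps_prod_state:
  assumes "c \<in> {1..n}" "\<forall>a\<in>{1..<c}. parity_even (f a)"
  shows "word_act [Ps c] (prod_state f) = prod_state (f(c := loc_Ps (f c)))"
proof
  fix t :: state
  obtain i j l where tc: "t c = (i, j, l)" by (cases "t c")
  have "word_act [Ps c] (prod_state f) t = (if i then jw_sign c t * (f c (False, j, l) * (\<Prod>a\<in>{1..n}-{c}. f a (t a))) else 0)"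
    by (simp add: gen_weight_def gen_move_def tc prod_state_state_upd[OF assms(1)] del: fun_upd_apply)
  also have "\<dots> = prod_state (f(c := loc_Ps (f c))) t"
    using jw_sign_parity_even[OF assms, of t]
    by (auto simp: prod_state_fun_upd[OF assms(1)] loc_Ps_def tc mult.assoc[symmetric])
  finally show "word_act [Ps c] (prod_state f) t = prod_state (f(c := loc_Ps (f c))) t" .
qed

lemma word_act_Om_prod_state:
  assumes "c \<in> {1..n}"
  shows "word_act [Om c] (prod_state f) = prod_state (f(c := loc_Om (f c)))"
proof
  fix t :: state
  obtain i j l where tc: "t c = (i, j, l)" by (cases "t c")
  show "word_act [Om c] (prod_state f) t = prod_state (f(c := loc_Om (f c))) t"
    by (simp add: gen_weight_def gen_move_def tc prod_state_state_upd[OF assms] prod_state_fun_upd[OF assms]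
        loc_Om_def mult.assoc del: fun_upd_apply)
qed

lemma word_act_replicate_prod_state:
  assumes "c \<in> {1..n}"
    and step: "\<And>f. \<forall>a\<in>{1..<c}. parity_even (f a) \<Longrightarrow> word_act [g] (prod_state f) = prod_state (f(c := L (f c)))"
    and "\<forall>a\<in>{1..<c}. parity_even (f a)"
  shows "word_act (replicate k g) (prod_state f) = prod_state (f(c := (L ^^ k) (f c)))"
proof (induction k)
  case (Suc k)
  have "word_act (replicate (Suc k) g) (prod_state f) = word_act [g] (word_act (replicate k g) (prod_state f))"
    using word_act_append[of "[g]" "replicate k g"] by simp
  also have "\<dots> = prod_state ((f(c := (L ^^ k) (f c)))(c := L ((L ^^ k) (f c))))"
    unfolding Suc.IH using step[of "f(c := (L ^^ k) (f c))"] assms(3) by auto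
  also have "\<dots> = prod_state (f(c := (L ^^ Suc k) (f c)))"
    by (simp only: fun_upd_upd funpow.simps comp_apply)
  finally show ?case .
qed (simp add: fun_upd_idem)

definition loc_word :: "nat \<Rightarrow> nat \<Rightarrow> nat \<Rightarrow> (site_state \<Rightarrow> 'k) \<Rightarrow> site_state \<Rightarrow> 'k" where
  "loc_word p d v h = (loc_Ph ^^ p) ((loc_Ps ^^ d) ((loc_Om ^^ v) h))"

lemma word_act_site_word_prod_state:
  assumes "c \<in> {1..n}" "\<forall>a\<in>{1..<c}. parity_even (f a)"
  shows "word_act (site_word c p d v) (prod_state f) = prod_state (f(c := loc_word p d v (f c)))"
proof -
  have even: "\<And>h. \<forall>a\<in>{1..<c}. parity_even ((f(c := h)) a)"
    using assms(2) by auto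
  have "word_act (site_word c p d v) (prod_state f) =
      word_act (replicate p (Ph c)) (word_act (replicate d (Ps c)) (word_act (replicate v (Om c)) (prod_state f)))"
    by (simp add: site_word_def word_act_append)
  also have "word_act (replicate v (Om c)) (prod_state f) = prod_state (f(c := (loc_Om ^^ v) (f c)))"
    using assms by (intro word_act_replicate_prod_state word_act_Om_prod_state)
  also have "word_act (replicate d (Ps c)) \<dots> = prod_state (f(c := (loc_Ps ^^ d) ((loc_Om ^^ v) (f c))))"
    using word_act_replicate_prod_state[OF assms(1) word_act_Ps_prod_state[OF assms(1)],
        of "f(c := (loc_Om ^^ v) (f c))" d] even by simp
  also have "word_act (replicate p (Ph c)) \<dots> = prod_state (f(c := loc_word p d v (f c)))"
    using word_act_replicate_prod_state[OF assms(1) word_act_Ph_prod_state[OF assms(1)],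
        of "f(c := (loc_Ps ^^ d) ((loc_Om ^^ v) (f c)))" p] even by (simp add: loc_word_def)
  finally show ?thesis .
qed

lemma word_act_ord_segment_prod_state:
  assumes "sorted_wrt (<) as" "set as \<subseteq> {1..n}" "\<forall>a. parity_even (f a)"
  shows "word_act (ord_segment p d v as) (prod_state f) =
    prod_state (\<lambda>a. if a \<in> set as then loc_word (p a) (d a) (v a) (f a) else f a)"
  using assms(1,2)
proof (induction as)
  case (Cons c as)
  let ?f = "\<lambda>a. if a \<in> set as then loc_word (p a) (d a) (v a) (f a) else f a"
  have c: "c \<in> {1..n}"
    using Cons.prems by auto
  have "word_act (ord_segment p d v (c # as)) (prod_state f) = word_act (site_word c (p c) (d c) (v c)) (prod_state ?f)"
    using Cons by (simp add: ord_segment_def word_act_append)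
  also have "\<dots> = prod_state (?f(c := loc_word (p c) (d c) (v c) (?f c)))"
    using Cons.prems assms(3) by (intro word_act_site_word_prod_state[OF c]) auto
  also have "?f(c := loc_word (p c) (d c) (v c) (?f c)) =
      (\<lambda>a. if a \<in> set (c # as) then loc_word (p a) (d a) (v a) (f a) else f a)"
    using Cons.prems by (auto simp: fun_eq_iff)
  finally show ?case .
qed (simp add: ord_segment_def)

definition ref_fn :: "site_state \<Rightarrow> 'k" where
  "ref_fn x = (if fst x = fst (snd x) \<and> snd (snd x) = 0 then 1 else 0)"

lemma word_act_ord_word_ref:
  "word_act (ord_word n p d v) (prod_state (\<lambda>_. ref_fn)) = prod_state (\<lambda>a. loc_word (p a) (d a) (v a) ref_fn)"
proof -
  have "word_act (ord_word n p d v) (prod_state (\<lambda>_. ref_fn)) =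
      prod_state (\<lambda>a. if a \<in> set [1..<n+1] then loc_word (p a) (d a) (v a) ref_fn else ref_fn)"
    unfolding ord_word_eq_ord_segment
    by (rule word_act_ord_segment_prod_state) (auto simp: parity_even_def ref_fn_def simp del: upt_Suc)
  also have "\<dots> = prod_state (\<lambda>a. loc_word (p a) (d a) (v a) ref_fn)"
    unfolding prod_state_def by (intro ext prod.cong) auto
  finally show ?thesis .
qed

lemma loc_Om_funpow:
  "(loc_Om ^^ v) h x = Om_weight x ^ v * h (fst x, fst (snd x), (phase_succ m ^^ v) (snd (snd x)))"
proof (induction v arbitrary: x)
  case (Suc v)
  obtain i j l where x: "x = (i, j, l)" by (cases x)
  have "(loc_Om ^^ Suc v) h x = Om_weight x * (loc_Om ^^ v) h (i, j, phase_succ m l)"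
    by (simp add: loc_Om_def x)
  also have "\<dots> = Om_weight x ^ Suc v * h (fst x, fst (snd x), (phase_succ m ^^ Suc v) (snd (snd x)))"
    by (simp only: Suc) (simp add: x Om_weight_def funpow_Suc_right del: funpow.simps)
  finally show ?case .
qed simp

text \<open>The state at which \<phi>^p (\<phi>^*)^d \<omega>^v detects the reference function: the occupation
  bit before \<phi>^p (\<phi>^*)^d, the reference bit it must match afterwards, and the phase that
  v steps rotate to 0.\<close>

definition probe :: "nat \<Rightarrow> nat \<Rightarrow> nat \<Rightarrow> site_state" where
  "probe p d v = (p = 0, d = 0, (m - v) mod m)"

lemma phase_succ_funpow_probe:
  assumes "v < m" "v' < m"
  shows "(phase_succ m ^^ v') ((m - v) mod m) = 0 \<longleftrightarrow> v' = v"
proof -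
  have "(m - v) mod m < m"
    using assms by simp
  then have "(phase_succ m ^^ v') ((m - v) mod m) = ((m - v) mod m + v') mod m"
    by (simp add: phase_succ_funpow)
  also have "\<dots> = (m - v + v') mod m"
    by (rule mod_add_left_eq)
  also have "\<dots> = 0 \<longleftrightarrow> v' = v"
  proof (cases "v \<le> v'")
    case True
    with assms have "m - v + v' = m + (v' - v)"
      by simp
    then have "(m - v + v') mod m = (v' - v) mod m"
      by (simp only: mod_add_self1)
    also have "\<dots> = v' - v"
      using assms by simp
    finally have "(m - v + v') mod m = v' - v" .
    then show ?thesis
      using True by simp
  next
    case False
    then have "0 < m - v + v'" "m - v + v' < m"
      using assms by auto
    then show ?thesis
      using assms False by simp
  qed
  finally show ?thesis .
qed

lemma loc_word_probe_self:
  assumes "p \<le> 1" "d \<le> 1" "v < m"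
  shows "loc_word p d v ref_fn (probe p d v) \<noteq> 0"
proof -
  have phase: "(phase_succ m ^^ v) ((m - v) mod m) = 0"
    using phase_succ_funpow_probe[OF assms(3,3)] by simp
  consider "p = 0" "d = 0" | "p = 0" "d = 1" | "p = 1" "d = 0" | "p = 1" "d = 1"
    using assms by linarith
  then show ?thesis
    by cases (simp_all add: loc_word_def probe_def loc_Ph_def loc_Ps_def loc_Om_funpow ref_fn_def
        Om_weight_def phase q_nonzero)
qed

lemma loc_word_probe_nonzero:
  assumes "p \<le> 1" "d \<le> 1" "v < m" "p' \<le> 1" "d' \<le> 1" "v' < m"
    and "loc_word p' d' v' ref_fn (probe p d v) \<noteq> 0"
  shows "v' = v \<and> ((p' = p \<and> d' = d) \<or> (p' = 0 \<and> d' = 0 \<and> p = 1 \<and> d = 1))"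
proof -
  have "p \<in> {0, 1}" "d \<in> {0, 1}" "p' \<in> {0, 1}" "d' \<in> {0, 1}"
    using assms by auto
  then show ?thesis
    using assms(7) phase_succ_funpow_probe[OF assms(3,6)]
    by (auto simp: loc_word_def probe_def loc_Ph_def loc_Ps_def loc_Om_funpow ref_fn_def Om_weight_def
        split: if_splits)
qed

definition probe_state :: "gen list \<Rightarrow> state" where
  "probe_state w a = probe (count_list w (Ph a)) (count_list w (Ps a)) (count_list w (Om a))"

definition full_sites :: "gen list \<Rightarrow> nat set" where
  "full_sites w = {a \<in> {1..n}. count_list w (Ph a) = 1 \<and> count_list w (Ps a) = 1}"

lemma word_act_basis_word_ref:
  assumes "w \<in> cl_basis_words m n"
  shows "word_act w (prod_state (\<lambda>_. ref_fn)) =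
    prod_state (\<lambda>a. loc_word (count_list w (Ph a)) (count_list w (Ps a)) (count_list w (Om a)) ref_fn)"
  using word_act_ord_word_ref cl_basis_word_decode(1)[OF assms] by metis

lemma basis_word_probe_self:
  assumes "w \<in> cl_basis_words m n"
  shows "word_act w (prod_state (\<lambda>_. ref_fn)) (probe_state w) \<noteq> 0"
  using loc_word_probe_self cl_basis_word_decode(2)[OF assms]
  by (simp add: word_act_basis_word_ref[OF assms] prod_state_def probe_state_def)

lemma basis_word_probe_other:
  assumes w: "w \<in> cl_basis_words m n" and w0: "w0 \<in> cl_basis_words m n" and "w \<noteq> w0"
    and nonzero: "word_act w (prod_state (\<lambda>_. ref_fn)) (probe_state w0) \<noteq> 0"
  shows "full_sites w \<subset> full_sites w0"
proof -
  let ?P = "\<lambda>w a. count_list w (Ph a)" and ?D = "\<lambda>w a. count_list w (Ps a)"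
    and ?V = "\<lambda>w a. count_list w (Om a)"
  have site: "?V w a = ?V w0 a \<and> ((?P w a = ?P w0 a \<and> ?D w a = ?D w0 a) \<or>
      (?P w a = 0 \<and> ?D w a = 0 \<and> ?P w0 a = 1 \<and> ?D w0 a = 1))" if a: "a \<in> {1..n}" for a
  proof (rule loc_word_probe_nonzero)
    show "loc_word (?P w a) (?D w a) (?V w a) ref_fn (probe (?P w0 a) (?D w0 a) (?V w0 a)) \<noteq> 0"
      using nonzero a by (auto simp: word_act_basis_word_ref[OF w] prod_state_def probe_state_def)
  qed (use cl_basis_word_decode(2)[OF w a] cl_basis_word_decode(2)[OF w0 a] in auto)
  have "full_sites w \<subseteq> full_sites w0"
  proof
    fix a
    assume "a \<in> full_sites w"
    then show "a \<in> full_sites w0"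
      using site[of a] by (auto simp: full_sites_def)
  qed
  moreover have "\<exists>a\<in>{1..n}. \<not> (?P w a = ?P w0 a \<and> ?D w a = ?D w0 a \<and> ?V w a = ?V w0 a)"
  proof (rule ccontr)
    assume "\<not> ?thesis"
    then have "ord_word n (?P w) (?D w) (?V w) = ord_word n (?P w0) (?D w0) (?V w0)"
      unfolding ord_word_eq_ord_segment by (intro ord_segment_cong) auto
    then show False
      using cl_basis_word_decode(1)[OF w] cl_basis_word_decode(1)[OF w0] \<open>w \<noteq> w0\<close> by simp
  qed
  then obtain a where "a \<in> {1..n}" "\<not> (?P w a = ?P w0 a \<and> ?D w a = ?D w0 a \<and> ?V w a = ?V w0 a)"
    by blast
  then have "a \<in> full_sites w0 - full_sites w"
    using site[of a] by (auto simp: full_sites_def)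
  ultimately show ?thesis
    by blast
qed

lemma cl_basis_words_independent:
  assumes "fin_supp g" "supp g \<subseteq> cl_basis_words m n" "g \<in> cl_ideal q m n"
  shows "g = (\<lambda>_. 0)"
proof (rule ccontr)
  assume "g \<noteq> (\<lambda>_. 0)"
  then obtain w1 where "w1 \<in> supp g"
    by (auto simp: supp_def)
  then obtain w0 where w0: "w0 \<in> supp g"
    and least: "\<And>w. w \<in> supp g \<Longrightarrow> card (full_sites w0) \<le> card (full_sites w)"
    using ex_has_least_nat[of "\<lambda>w. w \<in> supp g" w1 "\<lambda>w. card (full_sites w)"] by blast
  let ?E = "\<lambda>w. word_act w (prod_state (\<lambda>_. ref_fn)) (probe_state w0)"
  have others: "?E w = 0" if "w \<in> supp g - {w0}" for w
  proof (rule ccontr)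
    assume "?E w \<noteq> 0"
    then have "full_sites w \<subset> full_sites w0"
      using that w0 assms(2) by (intro basis_word_probe_other) auto
    then have "card (full_sites w) < card (full_sites w0)"
      by (rule psubset_card_mono[rotated]) (simp add: full_sites_def)
    with least that show False
      by fastforce
  qed
  have "0 = act g (prod_state (\<lambda>_. ref_fn)) (probe_state w0)"
    using cl_ideal_act_as_zero[OF assms(3)] by (simp add: acts_as_zero_def)
  also have "\<dots> = g w0 * ?E w0 + (\<Sum>w\<in>supp g - {w0}. g w * ?E w)"
    unfolding act_def using assms(1) w0 by (simp add: fin_supp_iff_finite_supp sum.remove)
  also have "\<dots> = g w0 * ?E w0"
    using others by simp
  finally have "g w0 * ?E w0 = 0" ..
  moreover have "g w0 \<noteq> 0"
    using w0 by (simp add: supp_def)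
  moreover have "?E w0 \<noteq> 0"
    using w0 assms(2) by (intro basis_word_probe_self) auto
  ultimately show False
    by simp
qed

end

theorem theorem5p2:
  fixes q :: "'k::field" and m n :: nat
  assumes char: "(2::'k) \<noteq> 0"
    and q: "q \<noteq> 0"
    and m: "m \<ge> 1"
    and n: "n \<ge> 1"
  shows "(\<forall>f. fin_supp f \<longrightarrow> (\<forall>w\<in>supp f. valid_word n w) \<longrightarrow>
            (\<exists>g. fin_supp g \<and> supp g \<subseteq> cl_basis_words m n \<and>
                 fsub f g \<in> cl_ideal q m n))
       \<and> (\<forall>g. fin_supp g \<longrightarrow> supp g \<subseteq> cl_basis_words m n \<longrightarrow>
            g \<in> cl_ideal q m n \<longrightarrow> g = (\<lambda>_. 0))"
  using cl_basis_words_span[OF char m] cl_basis_words_independent[OF q] by blast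

end
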